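(* Let $Z$ be a smooth $3$-dimensional toric variety whose fan contains two maximal cones $\mathrm{cone}(v_1,v_2,v_+)$ and $\mathrm{cone}(v_1,v_2,v_-)$ with $v_1,v_2,v_\pm$ primitive and $v_++v_-=x_1v_1+x_2v_2$, where $x_1,x_2$ are integers with $x_1\ge x_2\ge 0$. Suppose moreover that $x_1\ge 2$. Then the anticanonical bundle of any toric variety obtained from $Z$ by a sequence of blow-ups along torus-invariant subvarieties is not ample.
   Context: Toric varieties are for a 3-dimensional torus $S$, fans in $\chi_*(S)_{\mathbb{R}}$. A blow-up along a torus-invariant subvariety (orbit closure, corresponding to a cone $\tau$ of dimension $\ge2$) of a smooth toric variety is the toric variety obtained by star subdivision of the fan at the sum of the primitive generators of $\tau$. *)

theory Defs
  imports "HOL-Analysis.Analysis"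
begin

text \<open>Lattice N = Z^3 of one-parameter subgroups of the 3-dimensional torus S.
  A smooth fan is encoded combinatorially: each cone is represented by the
  finite set of primitive generators of its rays.\<close>

type_synonym lat = "int ^ 3"

definition primitive :: "lat \<Rightarrow> bool" where
  "primitive v \<longleftrightarrow> (\<forall>d::int. (\<forall>i. d dvd v $ i) \<longrightarrow> is_unit d)"

definition emb :: "lat \<Rightarrow> real ^ 3" where
  "emb v = (\<chi> i. real_of_int (v $ i))"

definition pos_cone :: "lat set \<Rightarrow> (real ^ 3) set" where
  "pos_cone S = {\<Sum>v\<in>S. c v *\<^sub>R emb v | c. \<forall>v\<in>S. 0 \<le> c v}"

definition unimodular :: "lat set \<Rightarrow> bool" where
  "unimodular S \<longleftrightarrow> (\<exists>B. S \<subseteq> B \<and> finite B \<and> card B = 3 \<and>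
      (\<forall>w::lat. \<exists>c::lat \<Rightarrow> int. w = (\<Sum>v\<in>B. c v *s v)))"

definition smooth_fan :: "lat set set \<Rightarrow> bool" where
  "smooth_fan \<Sigma> \<longleftrightarrow>
     finite \<Sigma> \<and> {} \<in> \<Sigma> \<and>
     (\<forall>S\<in>\<Sigma>. finite S \<and> (\<forall>v\<in>S. primitive v) \<and> unimodular S) \<and>
     (\<forall>S\<in>\<Sigma>. \<forall>T. T \<subseteq> S \<longrightarrow> T \<in> \<Sigma>) \<and>
     (\<forall>S\<in>\<Sigma>. \<forall>T\<in>\<Sigma>. pos_cone S \<inter> pos_cone T = pos_cone (S \<inter> T))"

definition star_subdivision :: "lat set set \<Rightarrow> lat set \<Rightarrow> lat set set" where
  "star_subdivision \<Sigma> \<tau> =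
     {S\<in>\<Sigma>. \<not> \<tau> \<subseteq> S} \<union>
     {insert (\<Sum>\<tau>) S | S. S \<in> \<Sigma> \<and> \<not> \<tau> \<subseteq> S \<and> S \<union> \<tau> \<in> \<Sigma>}"

definition toric_blowup :: "lat set set \<Rightarrow> lat set set \<Rightarrow> bool" where
  "toric_blowup \<Sigma> \<Sigma>' \<longleftrightarrow>
     (\<exists>\<tau>\<in>\<Sigma>. 2 \<le> card \<tau> \<and> \<Sigma>' = star_subdivision \<Sigma> \<tau>)"

definition pair :: "real ^ 3 \<Rightarrow> lat \<Rightarrow> real" where
  "pair m u = (\<Sum>i\<in>UNIV. m $ i * real_of_int (u $ i))"

text \<open>Ampleness of the anticanonical divisor -K = sum of all torus-invariant prime
  divisors D_\<rho>: for every cone \<sigma> there is m_\<sigma> with m_\<sigma>(u_\<rho>) = 1 on the rays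
  of \<sigma> and m_\<sigma>(u_\<rho>) < 1 on all other rays (strict convexity of the support
  function / existence of a section of a multiple of -K whose non-vanishing locus
  is the affine open U_\<sigma>).\<close>
definition anticanonical_ample :: "lat set set \<Rightarrow> bool" where
  "anticanonical_ample \<Sigma> \<longleftrightarrow>
     (\<forall>\<sigma>\<in>\<Sigma>. \<exists>m::real^3. (\<forall>u\<in>\<sigma>. pair m u = 1) \<and>
                      (\<forall>u\<in>\<Union>\<Sigma> - \<sigma>. pair m u < 1))"

end

theory Submission
  imports Defs
begin

text \<open>Suppose \<open>-K\<close> is ample on a blow-up \<open>\<Sigma>'\<close> of \<open>Z\<close>, so that every cone \<open>\<sigma>\<close> carries a
  linear form \<open>m\<close> equal to 1 on the rays of \<open>\<sigma>\<close> and less than 1 on all other rays. Star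
  subdivisions preserve the property that every lattice point of \<open>Q = cone(v1, v2)\<close> is a
  non-negative integer combination of the rays of one cone lying in \<open>Q\<close>. Writing
  \<open>z = v+ + v- = x1 v1 + x2 v2\<close> in such a cone, its form takes an integer value below 2 at
  \<open>z\<close>, since \<open>v+, v-\<close> are not in \<open>Q\<close>; so \<open>z\<close> is itself a ray. If \<open>x2 = 0\<close>, the ray \<open>z\<close> is the
  multiple \<open>x1 v1\<close> of the ray \<open>v1\<close>, which the form of a cone containing \<open>v1\<close> excludes. If
  \<open>x2 \<ge> 1\<close>, evaluating \<open>x1 (v1 + v2) = z + (x1 - x2) v2\<close> with the form of the cone whose
  lattice points include \<open>v1 + v2\<close> forces \<open>x2 = 1\<close> and makes \<open>v1 + v2\<close> a ray; the form of the
  cone \<open>{v1 + v2}\<close> then gives \<open>x1 < x1\<close>.\<close>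

section \<open>Linear independence in the lattice\<close>

lemma emb_add: "emb (a + b) = emb a + emb b"
  by (simp add: emb_def vec_eq_iff)

lemma emb_smult: "emb (k *s a) = real_of_int k *\<^sub>R emb a"
  by (simp add: emb_def vec_eq_iff)

lemma emb_sum: "emb (\<Sum>v\<in>B. c v *s v) = (\<Sum>v\<in>B. real_of_int (c v) *\<^sub>R emb v)"
  by (induction B rule: infinite_finite_induct)
     (simp_all add: emb_add emb_smult, simp_all add: emb_def vec_eq_iff)

lemma emb_axis: "emb (axis i 1) = axis i 1"
  by (simp add: emb_def vec_eq_iff axis_def)

lemma inj_emb: "inj emb"
  by (rule injI) (simp add: emb_def vec_eq_iff)

lemma lattice_basis_independent:
  fixes B :: "lat set"
  assumes "finite B" "card B = 3" "\<And>w. \<exists>c. w = (\<Sum>v\<in>B. c v *s v)"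
    and "(\<Sum>v\<in>B. a v *s v) = 0" "v \<in> B"
  shows "a v = 0"
proof -
  have "axis i 1 \<in> span (emb ` B)" for i :: 3
  proof -
    obtain c where "axis i 1 = (\<Sum>v\<in>B. c v *s v)" using assms(3) by blast
    then have "axis i 1 = (\<Sum>v\<in>B. real_of_int (c v) *\<^sub>R emb v)"
      by (metis emb_sum emb_axis)
    also have "\<dots> \<in> span (emb ` B)"
      by (intro span_sum span_scale span_base) simp
    finally show ?thesis .
  qed
  then have "span Basis \<subseteq> span (emb ` B)"
    by (intro span_minimal) (auto simp: Basis_vec_def)
  moreover have "card (emb ` B) = dim (UNIV :: (real ^ 3) set)"
    using assms(2) inj_emb by (simp add: card_image inj_on_subset)
  ultimately have indep: "independent (emb ` B)"
    using card_eq_dim[of "emb ` B" UNIV] assms(1) by simp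
  define u where "u x = real_of_int (a (inv emb x))" for x
  have "(\<Sum>x\<in>emb ` B. u x *\<^sub>R x) = emb (\<Sum>v\<in>B. a v *s v)"
    using inj_emb by (simp add: sum.reindex inj_on_subset u_def emb_sum)
  also have "\<dots> = 0" using assms(4) by (simp add: emb_def vec_eq_iff)
  finally have "u (emb v) = 0"
    using indep assms(5) by (auto simp: independent_explicit)
  then show ?thesis using inj_emb by (simp add: u_def)
qed

lemma unimodular_triple_independent:
  assumes "unimodular {v1, v2, v3}" "card {v1, v2, v3} = 3"
    and "a *s v1 + b *s v2 + d *s v3 = 0"
  shows "a = 0 \<and> b = 0 \<and> d = 0"
proof -
  obtain B where B: "{v1, v2, v3} \<subseteq> B" "finite B" "card B = 3"
    "\<And>w. \<exists>c. w = (\<Sum>v\<in>B. c v *s v)"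
    using assms(1) unfolding unimodular_def by blast
  have B_eq: "B = {v1, v2, v3}"
    using card_subset_eq[OF B(2,1)] B(3) assms(2) by simp
  have distinct: "v1 \<noteq> v2" "v1 \<noteq> v3" "v2 \<noteq> v3"
    using assms(2) by (auto simp: card_insert_if split: if_splits)
  define c where "c v = (if v = v1 then a else if v = v2 then b else d)" for v
  have "(\<Sum>v\<in>B. c v *s v) = 0"
    using distinct assms(3) by (simp add: B_eq c_def add.assoc)
  from lattice_basis_independent[OF B(2,3,4) this] have "\<forall>v\<in>{v1, v2, v3}. c v = 0"
    by (simp add: B_eq)
  then show ?thesis using distinct by (simp add: c_def)
qed

lemma unimodular_triple_coeffs_eq:
  assumes "unimodular {v1, v2, v3}" "card {v1, v2, v3} = 3"
  shows "a *s v1 + b *s v2 = a' *s v1 + b' *s v2 \<longleftrightarrow> a = a' \<and> b = b'"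
proof
  assume "a *s v1 + b *s v2 = a' *s v1 + b' *s v2"
  then have "(a - a') *s v1 + (b - b') *s v2 + 0 *s v3 = 0"
    by (simp add: vec_eq_iff algebra_simps)
  from unimodular_triple_independent[OF assms this] show "a = a' \<and> b = b'" by simp
qed simp

lemma unimodular_triple_not_in_span:
  assumes "unimodular {v1, v2, v3}" "card {v1, v2, v3} = 3"
  shows "v3 \<noteq> a *s v1 + b *s v2"
proof
  assume "v3 = a *s v1 + b *s v2"
  then have "a *s v1 + b *s v2 + (-1) *s v3 = 0" by (simp add: vec_eq_iff)
  from unimodular_triple_independent[OF assms this] show False by simp
qed

section \<open>Non-negative integer spans\<close>

text \<open>For a smooth cone \<open>S\<close> this is the set of lattice points of \<open>pos_cone S\<close>.\<close>

definition nonneg_span :: "lat set \<Rightarrow> lat set" where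
  "nonneg_span S = {\<Sum>u\<in>S. c u *s u | c. \<forall>u\<in>S. 0 \<le> c u}"

lemma nonneg_span_zero: "0 \<in> nonneg_span S"
  unfolding nonneg_span_def by (rule CollectI, rule exI[of _ "\<lambda>_. 0"]) simp

lemma nonneg_span_add:
  assumes "x \<in> nonneg_span S" "y \<in> nonneg_span S"
  shows "x + y \<in> nonneg_span S"
proof -
  obtain c d where "x = (\<Sum>u\<in>S. c u *s u)" "y = (\<Sum>u\<in>S. d u *s u)"
    "\<forall>u\<in>S. 0 \<le> c u" "\<forall>u\<in>S. 0 \<le> d u"
    using assms unfolding nonneg_span_def by blast
  then show ?thesis unfolding nonneg_span_def
    by (intro CollectI exI[of _ "\<lambda>u. c u + d u"])
       (simp add: vector_sadd_rdistrib sum.distrib)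
qed

lemma nonneg_span_smult_base:
  assumes "finite S" "u \<in> S" "0 \<le> k"
  shows "k *s u \<in> nonneg_span S"
  unfolding nonneg_span_def using assms
  by (intro CollectI exI[of _ "\<lambda>v. if v = u then k else 0"])
     (simp add: sum.delta[OF assms(1)] if_distrib[of "\<lambda>k. k *s _"] cong: if_cong)

lemma nonneg_span_base: "finite S \<Longrightarrow> u \<in> S \<Longrightarrow> u \<in> nonneg_span S"
  using nonneg_span_smult_base[of S u 1] by simp

lemma nonneg_span_sum:
  "(\<And>i. i \<in> I \<Longrightarrow> f i \<in> nonneg_span S) \<Longrightarrow> sum f I \<in> nonneg_span S"
  by (induction I rule: infinite_finite_induct) (simp_all add: nonneg_span_zero nonneg_span_add)

lemma nonneg_span_pair:
  assumes "v1 \<noteq> v2"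
  shows "nonneg_span {v1, v2} = {a *s v1 + b *s v2 | a b. 0 \<le> a \<and> 0 \<le> b}"
proof
  show "nonneg_span {v1, v2} \<subseteq> {a *s v1 + b *s v2 | a b. 0 \<le> a \<and> 0 \<le> b}"
    using assms unfolding nonneg_span_def by auto
  show "{a *s v1 + b *s v2 | a b. 0 \<le> a \<and> 0 \<le> b} \<subseteq> nonneg_span {v1, v2}"
    by (auto intro!: nonneg_span_add nonneg_span_smult_base)
qed

text \<open>The generator \<open>u0\<close> of \<open>\<tau>\<close> with the smallest coefficient is traded for the new
  ray \<open>\<Sum>\<tau>\<close>, the excess coefficients on \<open>\<tau>\<close> staying non-negative.\<close>

lemma nonneg_span_star:
  assumes "finite \<rho>" "\<tau> \<subseteq> \<rho>" "\<tau> \<noteq> {}" "y \<in> nonneg_span \<rho>"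
  obtains u0 where "u0 \<in> \<tau>" "y \<in> nonneg_span (insert (\<Sum>\<tau>) (\<rho> - {u0}))"
proof -
  obtain c where c: "\<forall>u\<in>\<rho>. 0 \<le> c u" and y: "y = (\<Sum>u\<in>\<rho>. c u *s u)"
    using assms(4) unfolding nonneg_span_def by blast
  have "finite \<tau>" using assms(1,2) finite_subset by blast
  then have "Min (c ` \<tau>) \<in> c ` \<tau>" using assms(3) by simp
  then obtain u0 where u0: "u0 \<in> \<tau>" "c u0 = Min (c ` \<tau>)" by auto
  have min: "c u0 \<le> c u" if "u \<in> \<tau>" for u
    using u0(2) \<open>finite \<tau>\<close> that by simp
  define \<rho>' where "\<rho>' = insert (\<Sum>\<tau>) (\<rho> - {u0})"
  define d where "d u = c u - (if u \<in> \<tau> then c u0 else 0)" for u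
  have "y = (\<Sum>u\<in>\<rho>. d u *s u + (if u \<in> \<tau> then c u0 *s u else 0))"
    unfolding y d_def by (intro sum.cong) (auto simp: vector_sub_rdistrib)
  also have "\<dots> = (\<Sum>u\<in>\<rho>. d u *s u) + c u0 *s \<Sum>\<tau>"
    using assms(1,2)
    by (simp add: sum.distrib sum.inter_restrict[symmetric] Int_absorb1 vec_eq_iff sum_distrib_left)
  also have "(\<Sum>u\<in>\<rho>. d u *s u) = (\<Sum>u\<in>\<rho> - {u0}. d u *s u)"
    using sum.remove[OF assms(1), of u0 "\<lambda>u. d u *s u"] assms(2) u0(1) by (auto simp: d_def)
  finally have y': "y = (\<Sum>u\<in>\<rho> - {u0}. d u *s u) + c u0 *s \<Sum>\<tau>" .
  have "finite \<rho>'" using assms(1) by (simp add: \<rho>'_def)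
  moreover have "0 \<le> d u" if "u \<in> \<rho>" for u
    using c min that by (simp add: d_def)
  moreover have "0 \<le> c u0" using c assms(2) u0(1) by blast
  ultimately have "y \<in> nonneg_span \<rho>'"
    unfolding y' by (intro nonneg_span_add nonneg_span_sum nonneg_span_smult_base) (auto simp: \<rho>'_def)
  with u0(1) show ?thesis unfolding \<rho>'_def by (rule that)
qed

lemma pair_add: "pair m (a + b) = pair m a + pair m b"
  by (simp add: pair_def algebra_simps sum.distrib)

lemma pair_smult: "pair m (k *s a) = real_of_int k * pair m a"
  by (simp add: pair_def algebra_simps sum_distrib_left)

lemma pair_sum: "pair m (\<Sum>u\<in>A. c u *s u) = (\<Sum>u\<in>A. real_of_int (c u) * pair m u)"
  by (induction A rule: infinite_finite_induct)
     (simp_all add: pair_add pair_smult, simp_all add: pair_def)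

lemma nonneg_span_level:
  assumes "finite \<sigma>" "\<forall>u\<in>\<sigma>. pair m u = 1" "y \<in> nonneg_span \<sigma>"
  obtains n :: nat where "pair m y = n" "n = 0 \<Longrightarrow> y = 0" "n = 1 \<Longrightarrow> y \<in> \<sigma>"
proof -
  obtain c where c: "\<forall>u\<in>\<sigma>. 0 \<le> c u" and y: "y = (\<Sum>u\<in>\<sigma>. c u *s u)"
    using assms(3) unfolding nonneg_span_def by blast
  define s where "s = (\<Sum>u\<in>\<sigma>. c u)"
  have "0 \<le> s" using c by (simp add: s_def sum_nonneg)
  have pair_y: "pair m y = of_int s"
    using assms(2) by (simp add: y pair_sum s_def)
  have "y = 0" if "s = 0"
  proof -
    have "\<forall>u\<in>\<sigma>. c u = 0" using that c assms(1) by (simp add: s_def sum_nonneg_eq_0_iff)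
    then show ?thesis by (simp add: y)
  qed
  moreover have "y \<in> \<sigma>" if "s = 1"
  proof -
    obtain u where u: "u \<in> \<sigma>" "c u \<noteq> 0"
      using \<open>s = 1\<close> by (metis s_def sum.neutral zero_neq_one)
    have split: "s = c u + (\<Sum>v\<in>\<sigma> - {u}. c v)"
      using assms(1) u(1) by (simp add: s_def sum.remove)
    moreover have "0 \<le> (\<Sum>v\<in>\<sigma> - {u}. c v)" using c by (intro sum_nonneg) simp
    moreover have "0 < c u" using c u by force
    ultimately have "c u = 1" "(\<Sum>v\<in>\<sigma> - {u}. c v) = 0" using \<open>s = 1\<close> by linarith+
    then have "\<forall>v\<in>\<sigma> - {u}. c v = 0" using c assms(1) sum_nonneg_eq_0_iff[of "\<sigma> - {u}" c] by simp
    then have "y = u"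
      using \<open>c u = 1\<close> assms(1) u(1) by (simp add: y sum.remove)
    with u(1) show ?thesis by simp
  qed
  ultimately show ?thesis
    using that[of "nat s"] pair_y \<open>0 \<le> s\<close> by simp
qed

section \<open>Star subdivisions\<close>

definition downward_closed :: "'a set set \<Rightarrow> bool" where
  "downward_closed \<Sigma> \<longleftrightarrow> (\<forall>S\<in>\<Sigma>. \<forall>T\<subseteq>S. T \<in> \<Sigma>)"

definition covers_lattice_points :: "lat set set \<Rightarrow> lat set \<Rightarrow> bool" where
  "covers_lattice_points \<Sigma> Q \<longleftrightarrow> (\<forall>y\<in>Q. \<exists>\<rho>\<in>\<Sigma>. finite \<rho> \<and> \<rho> \<subseteq> Q \<and> y \<in> nonneg_span \<rho>)"

lemma covers_lattice_points_cone:
  assumes "G \<in> \<Sigma>" "finite G"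
  shows "covers_lattice_points \<Sigma> (nonneg_span G)"
  unfolding covers_lattice_points_def
  using assms by (intro ballI bexI[of _ G] conjI subsetI) (simp_all add: nonneg_span_base)

lemma star_subdivisionI1: "S \<in> \<Sigma> \<Longrightarrow> \<not> \<tau> \<subseteq> S \<Longrightarrow> S \<in> star_subdivision \<Sigma> \<tau>"
  unfolding star_subdivision_def by blast

lemma star_subdivisionI2:
  "S \<in> \<Sigma> \<Longrightarrow> \<not> \<tau> \<subseteq> S \<Longrightarrow> S \<union> \<tau> \<in> \<Sigma> \<Longrightarrow> insert (\<Sum>\<tau>) S \<in> star_subdivision \<Sigma> \<tau>"
  unfolding star_subdivision_def by blast

lemma star_subdivision_downward_closed:
  assumes "downward_closed \<Sigma>"
  shows "downward_closed (star_subdivision \<Sigma> \<tau>)"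
  unfolding downward_closed_def
proof (intro ballI allI impI)
  fix S T assume S: "S \<in> star_subdivision \<Sigma> \<tau>" and "T \<subseteq> S"
  from S consider "S \<in> \<Sigma>" "\<not> \<tau> \<subseteq> S"
    | S0 where "S = insert (\<Sum>\<tau>) S0" "S0 \<in> \<Sigma>" "\<not> \<tau> \<subseteq> S0" "S0 \<union> \<tau> \<in> \<Sigma>"
    unfolding star_subdivision_def by blast
  then show "T \<in> star_subdivision \<Sigma> \<tau>"
  proof cases
    case 1
    then show ?thesis using \<open>T \<subseteq> S\<close> assms
      by (intro star_subdivisionI1) (auto simp: downward_closed_def)
  next
    case (2 S0)
    define T0 where "T0 = T - {\<Sum>\<tau>}"
    have "T0 \<subseteq> S0" using \<open>T \<subseteq> S\<close> 2(1) by (auto simp: T0_def)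
    have T0: "T0 \<in> \<Sigma>" "\<not> \<tau> \<subseteq> T0" "T0 \<union> \<tau> \<in> \<Sigma>"
    proof -
      show "T0 \<in> \<Sigma>" using 2(2) \<open>T0 \<subseteq> S0\<close> assms by (simp add: downward_closed_def)
      show "\<not> \<tau> \<subseteq> T0" using 2(3) \<open>T0 \<subseteq> S0\<close> by blast
      have "T0 \<union> \<tau> \<subseteq> S0 \<union> \<tau>" using \<open>T0 \<subseteq> S0\<close> by blast
      then show "T0 \<union> \<tau> \<in> \<Sigma>" using 2(4) assms by (simp add: downward_closed_def)
    qed
    show ?thesis
    proof (cases "\<Sum>\<tau> \<in> T")
      case True
      then have "T = insert (\<Sum>\<tau>) T0" by (auto simp: T0_def)
      with T0 show ?thesis by (simp add: star_subdivisionI2)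
    next
      case False
      then have "T = T0" by (simp add: T0_def)
      with T0 show ?thesis by (simp add: star_subdivisionI1)
    qed
  qed
qed

lemma rays_star_subdivision:
  assumes "downward_closed \<Sigma>" "2 \<le> card \<tau>"
  shows "\<Union>\<Sigma> \<subseteq> \<Union>(star_subdivision \<Sigma> \<tau>)"
proof
  fix u assume "u \<in> \<Union>\<Sigma>"
  then obtain S where "S \<in> \<Sigma>" "{u} \<subseteq> S" by blast
  then have "{u} \<in> \<Sigma>" using assms(1) by (simp add: downward_closed_def)
  moreover have "\<not> \<tau> \<subseteq> {u}"
  proof
    assume "\<tau> \<subseteq> {u}"
    then have "card \<tau> \<le> 1" using card_mono[of "{u}" \<tau>] by simp
    with assms(2) show False by simp
  qed
  ultimately have "{u} \<in> star_subdivision \<Sigma> \<tau>" by (rule star_subdivisionI1)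
  then show "u \<in> \<Union>(star_subdivision \<Sigma> \<tau>)" by blast
qed

lemma star_subdivision_covers_lattice_points:
  assumes "downward_closed \<Sigma>" "\<tau> \<in> \<Sigma>" "\<tau> \<noteq> {}"
    and cover: "covers_lattice_points \<Sigma> (nonneg_span G)"
  shows "covers_lattice_points (star_subdivision \<Sigma> \<tau>) (nonneg_span G)"
  unfolding covers_lattice_points_def
proof
  fix y assume "y \<in> nonneg_span G"
  then obtain \<rho> where \<rho>: "\<rho> \<in> \<Sigma>" "finite \<rho>" "\<rho> \<subseteq> nonneg_span G" "y \<in> nonneg_span \<rho>"
    using cover unfolding covers_lattice_points_def by blast
  show "\<exists>\<rho>\<in>star_subdivision \<Sigma> \<tau>. finite \<rho> \<and> \<rho> \<subseteq> nonneg_span G \<and> y \<in> nonneg_span \<rho>"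
  proof (cases "\<tau> \<subseteq> \<rho>")
    case False
    then have "\<rho> \<in> star_subdivision \<Sigma> \<tau>" using \<rho>(1) by (intro star_subdivisionI1)
    then show ?thesis using \<rho>(2-4) by blast
  next
    case True
    then obtain u0 where u0: "u0 \<in> \<tau>" "y \<in> nonneg_span (insert (\<Sum>\<tau>) (\<rho> - {u0}))"
      by (rule nonneg_span_star[OF \<rho>(2) _ assms(3) \<rho>(4)])
    have "\<rho> - {u0} \<in> \<Sigma>" using assms(1) \<rho>(1) by (simp add: downward_closed_def)
    moreover have "(\<rho> - {u0}) \<union> \<tau> = \<rho>" using True u0(1) by blast
    moreover have "\<not> \<tau> \<subseteq> \<rho> - {u0}" using u0(1) by blast
    ultimately have "insert (\<Sum>\<tau>) (\<rho> - {u0}) \<in> star_subdivision \<Sigma> \<tau>"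
      using \<rho>(1) by (simp add: star_subdivisionI2)
    moreover have "\<Sum>\<tau> \<in> nonneg_span G"
      using True \<rho>(3) by (intro nonneg_span_sum) auto
    ultimately show ?thesis
      using \<rho>(2,3) u0(2) by (intro bexI[of _ "insert (\<Sum>\<tau>) (\<rho> - {u0})"]) auto
  qed
qed

lemma toric_blowups_preserve:
  assumes "toric_blowup\<^sup>*\<^sup>* \<Sigma> \<Sigma>'" "downward_closed \<Sigma>"
    and "covers_lattice_points \<Sigma> (nonneg_span G)"
  shows "downward_closed \<Sigma>' \<and> \<Union>\<Sigma> \<subseteq> \<Union>\<Sigma>' \<and> covers_lattice_points \<Sigma>' (nonneg_span G)"
  using assms(1)
proof (induction rule: rtranclp_induct)
  case base
  then show ?case using assms(2,3) by simp
next
  case (step \<Sigma>1 \<Sigma>2)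
  from step.hyps(2) obtain \<tau> where \<tau>: "\<tau> \<in> \<Sigma>1" "2 \<le> card \<tau>" "\<Sigma>2 = star_subdivision \<Sigma>1 \<tau>"
    unfolding toric_blowup_def by blast
  have IH: "downward_closed \<Sigma>1" "\<Union>\<Sigma> \<subseteq> \<Union>\<Sigma>1" "covers_lattice_points \<Sigma>1 (nonneg_span G)"
    using step.IH by simp_all
  have "\<tau> \<noteq> {}" using \<tau>(2) by (intro notI) simp
  have "downward_closed \<Sigma>2"
    unfolding \<tau>(3) by (rule star_subdivision_downward_closed[OF IH(1)])
  moreover have "\<Union>\<Sigma> \<subseteq> \<Union>\<Sigma>2"
    using IH(2) rays_star_subdivision[OF IH(1) \<tau>(2)] unfolding \<tau>(3) by (rule subset_trans)
  moreover have "covers_lattice_points \<Sigma>2 (nonneg_span G)"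
    unfolding \<tau>(3) by (rule star_subdivision_covers_lattice_points[OF IH(1) \<tau>(1) \<open>\<tau> \<noteq> {}\<close> IH(3)])
  ultimately show ?case by (intro conjI)
qed

lemma toric_blowups_of_smooth_fan:
  assumes "smooth_fan \<Sigma>" "toric_blowup\<^sup>*\<^sup>* \<Sigma> \<Sigma>'" "G \<in> \<Sigma>"
  shows "downward_closed \<Sigma>'" "\<Union>\<Sigma> \<subseteq> \<Union>\<Sigma>'" "covers_lattice_points \<Sigma>' (nonneg_span G)"
proof -
  have "downward_closed \<Sigma>" using assms(1) by (simp add: smooth_fan_def downward_closed_def)
  moreover have "covers_lattice_points \<Sigma> (nonneg_span G)"
    using assms(1,3) by (intro covers_lattice_points_cone) (auto simp: smooth_fan_def)
  ultimately show "downward_closed \<Sigma>'" "\<Union>\<Sigma> \<subseteq> \<Union>\<Sigma>'" "covers_lattice_points \<Sigma>' (nonneg_span G)"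
    using toric_blowups_preserve[OF assms(2)] by simp_all
qed

section \<open>Consequences of ampleness\<close>

lemma anticanonical_ample_support:
  assumes "anticanonical_ample \<Sigma>" "\<sigma> \<in> \<Sigma>"
  obtains m where "\<forall>u\<in>\<sigma>. pair m u = 1" "\<forall>u\<in>\<Union>\<Sigma> - \<sigma>. pair m u < 1"
    "\<forall>u\<in>\<Union>\<Sigma>. pair m u \<le> 1"
proof -
  obtain m where m: "\<forall>u\<in>\<sigma>. pair m u = 1" "\<forall>u\<in>\<Union>\<Sigma> - \<sigma>. pair m u < 1"
    using assms unfolding anticanonical_ample_def by blast
  have "pair m u \<le> 1" if "u \<in> \<Union>\<Sigma>" for u
  proof (cases "u \<in> \<sigma>")
    case False
    with that have "u \<in> \<Union>\<Sigma> - \<sigma>" by (rule DiffI)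
    then show ?thesis using bspec[OF m(2)] by fastforce
  qed (simp add: m(1))
  then have "\<forall>u\<in>\<Union>\<Sigma>. pair m u \<le> 1" by blast
  with m show ?thesis by (rule that)
qed

lemma anticanonical_ample_level:
  assumes "anticanonical_ample \<Sigma>" "\<sigma> \<in> \<Sigma>" "finite \<sigma>" "y \<in> nonneg_span \<sigma>"
  obtains m and n :: nat where "pair m y = n" "n = 0 \<Longrightarrow> y = 0" "n = 1 \<Longrightarrow> y \<in> \<sigma>"
    "\<forall>u\<in>\<Union>\<Sigma> - \<sigma>. pair m u < 1" "\<forall>u\<in>\<Union>\<Sigma>. pair m u \<le> 1"
proof -
  obtain m where m: "\<forall>u\<in>\<sigma>. pair m u = 1" "\<forall>u\<in>\<Union>\<Sigma> - \<sigma>. pair m u < 1"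
    "\<forall>u\<in>\<Union>\<Sigma>. pair m u \<le> 1"
    by (rule anticanonical_ample_support[OF assms(1,2)])
  obtain n :: nat where n: "pair m y = n" "n = 0 \<Longrightarrow> y = 0" "n = 1 \<Longrightarrow> y \<in> \<sigma>"
    using nonneg_span_level[OF assms(3) m(1) assms(4)] by blast
  show ?thesis by (rule that[OF n m(2,3)])
qed

lemma sum_of_rays_outside_is_ray:
  assumes "anticanonical_ample \<Sigma>" "covers_lattice_points \<Sigma> Q"
    and "a \<in> \<Union>\<Sigma> - Q" "b \<in> \<Union>\<Sigma> - Q" "a + b \<in> Q" "a + b \<noteq> 0"
  shows "a + b \<in> \<Union>\<Sigma>"
proof -
  obtain \<rho> where \<rho>: "\<rho> \<in> \<Sigma>" "finite \<rho>" "\<rho> \<subseteq> Q" "a + b \<in> nonneg_span \<rho>"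
    using assms(2,5) unfolding covers_lattice_points_def by blast
  then obtain m and n :: nat
    where n: "pair m (a + b) = n" "n = 0 \<Longrightarrow> a + b = 0" "n = 1 \<Longrightarrow> a + b \<in> \<rho>"
    and lt: "\<forall>u\<in>\<Union>\<Sigma> - \<rho>. pair m u < 1"
    using anticanonical_ample_level[OF assms(1)] by metis
  have "pair m a < 1" "pair m b < 1" using lt assms(3,4) \<rho>(3) by blast+
  then have "n < 2" using n(1) by (simp add: pair_add)
  then have "n = 1" using n(2) assms(6) by linarith
  with n(3) \<rho>(1) show ?thesis by blast
qed

lemma multiple_of_ray_not_ray:
  assumes "anticanonical_ample \<Sigma>" "u \<in> \<Union>\<Sigma>" "1 < k"
  shows "k *s u \<notin> \<Union>\<Sigma>"
proof
  assume ku: "k *s u \<in> \<Union>\<Sigma>"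
  obtain \<sigma> where "\<sigma> \<in> \<Sigma>" "u \<in> \<sigma>" using assms(2) by blast
  then obtain m where m: "pair m u = 1" "\<forall>w\<in>\<Union>\<Sigma>. pair m w \<le> 1"
    using anticanonical_ample_support[OF assms(1)] by metis
  have "pair m (k *s u) = of_int k" using m(1) by (simp add: pair_smult)
  moreover have "pair m (k *s u) \<le> 1" using m(2) ku by blast
  ultimately show False using assms(3) by simp
qed

lemma covered_combination_level:
  assumes "anticanonical_ample \<Sigma>" "covers_lattice_points \<Sigma> Q"
    and "y \<in> Q" "y \<noteq> 0" "z \<in> \<Union>\<Sigma>" "v \<in> \<Union>\<Sigma>" "0 \<le> j" "k *s y = z + j *s v"
  shows "k \<le> 1 + j" and "k = 1 + j \<Longrightarrow> y \<in> \<Union>\<Sigma>"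
proof -
  obtain \<rho> where \<rho>: "\<rho> \<in> \<Sigma>" "finite \<rho>" "y \<in> nonneg_span \<rho>"
    using assms(2,3) unfolding covers_lattice_points_def by blast
  then obtain m and n :: nat where n: "pair m y = n" "n = 0 \<Longrightarrow> y = 0" "n = 1 \<Longrightarrow> y \<in> \<rho>"
    and le: "\<forall>u\<in>\<Union>\<Sigma>. pair m u \<le> 1"
    using anticanonical_ample_level[OF assms(1)] by metis
  have "1 \<le> n" using n(2) assms(4) by linarith
  have "of_int k * real n = pair m z + of_int j * pair m v"
    using arg_cong[OF assms(8), of "pair m"] n(1) by (simp add: pair_add pair_smult)
  also have "\<dots> \<le> 1 + of_int j"
    using le assms(5,6,7) mult_left_mono[of "pair m v" 1 "of_int j"] by fastforce
  finally have bound: "of_int k * real n \<le> 1 + of_int j" .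
  show "k \<le> 1 + j"
  proof (cases "0 \<le> k")
    case True
    then have "of_int k * 1 \<le> of_int k * real n"
      using \<open>1 \<le> n\<close> by (intro mult_left_mono) simp_all
    then show ?thesis using bound by linarith
  next
    case False
    with assms(7) show ?thesis by linarith
  qed
  assume "k = 1 + j"
  then have "real n \<le> 1" using bound assms(7) by (simp add: mult_le_cancel_right1)
  then have "n = 1" using \<open>1 \<le> n\<close> by linarith
  with n(3) \<rho>(1) show "y \<in> \<Union>\<Sigma>" by blast
qed

lemma ray_not_combination:
  assumes "anticanonical_ample \<Sigma>" "{y} \<in> \<Sigma>" "a \<in> \<Union>\<Sigma> - {y}" "b \<in> \<Union>\<Sigma> - {y}" "0 \<le> j"
  shows "(1 + j) *s y \<noteq> a + j *s b"
proof
  assume eq: "(1 + j) *s y = a + j *s b"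
  obtain m where m: "pair m y = 1" "\<forall>u\<in>\<Union>\<Sigma> - {y}. pair m u < 1"
    using assms(1,2) unfolding anticanonical_ample_def by blast
  have "1 + of_int j = pair m a + of_int j * pair m b"
    using arg_cong[OF eq, of "pair m"] m(1) by (simp add: pair_add pair_smult)
  moreover have "pair m a < 1" "pair m b < 1" using m(2) assms(3,4) by blast+
  moreover have "of_int j * pair m b \<le> of_int j"
    using mult_left_mono[of "pair m b" 1 "of_int j"] \<open>pair m b < 1\<close> assms(5) by simp
  ultimately show False by linarith
qed

lemma covered_combination_bound:
  assumes "anticanonical_ample \<Sigma>" "downward_closed \<Sigma>" "covers_lattice_points \<Sigma> Q"
    and "y \<in> Q" "y \<noteq> 0" "z \<in> \<Union>\<Sigma> - {y}" "v \<in> \<Union>\<Sigma> - {y}" "0 \<le> j" "k *s y = z + j *s v"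
  shows "k \<le> j"
proof -
  note level = covered_combination_level[OF assms(1,3-5) _ _ assms(8,9)]
  have "k \<noteq> 1 + j"
  proof
    assume "k = 1 + j"
    then have "y \<in> \<Union>\<Sigma>" using level(2) assms(6,7) by blast
    then have "{y} \<in> \<Sigma>" using assms(2) by (auto simp: downward_closed_def)
    from ray_not_combination[OF assms(1) this assms(6-8)] assms(9) \<open>k = 1 + j\<close> show False
      by simp
  qed
  with level(1) assms(6,7) show ?thesis by fastforce
qed

theorem lemma4p1:
  fixes \<Sigma> :: "lat set set" and v1 v2 vp vm :: lat and x1 x2 :: int
  assumes "smooth_fan \<Sigma>"
    and "{v1, v2, vp} \<in> \<Sigma>" and "card {v1, v2, vp} = 3"
    and "{v1, v2, vm} \<in> \<Sigma>" and "card {v1, v2, vm} = 3"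
    and "vp \<noteq> vm"
    and "vp + vm = x1 *s v1 + x2 *s v2"
    and "x1 \<ge> x2" and "x2 \<ge> 0" and "x1 \<ge> 2"
    and "toric_blowup\<^sup>*\<^sup>* \<Sigma> \<Sigma>'"
  shows "\<not> anticanonical_ample \<Sigma>'"
proof
  assume ample: "anticanonical_ample \<Sigma>'"
  have "v1 \<noteq> v2" using assms(3) by (auto simp: card_insert_if split: if_splits)
  have unimod: "unimodular {v1, v2, vp}" using assms(1,2) by (simp add: smooth_fan_def)
  note coeffs = unimodular_triple_coeffs_eq[OF unimod assms(3)]
  note vp_outside = unimodular_triple_not_in_span[OF unimod assms(3)]
  define Q where "Q = nonneg_span {v1, v2}"
  have Q: "y \<in> Q \<longleftrightarrow> (\<exists>a b. y = a *s v1 + b *s v2 \<and> 0 \<le> a \<and> 0 \<le> b)" for y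
    unfolding Q_def nonneg_span_pair[OF \<open>v1 \<noteq> v2\<close>] by blast
  have "{v1, v2} \<in> \<Sigma>" using assms(1,2) by (auto simp: smooth_fan_def)
  note \<Sigma>' = toric_blowups_of_smooth_fan[OF assms(1,11) this, folded Q_def]
  have rays: "v1 \<in> \<Union>\<Sigma>'" "v2 \<in> \<Union>\<Sigma>'" "vp \<in> \<Union>\<Sigma>'" "vm \<in> \<Union>\<Sigma>'"
    using \<Sigma>'(2) assms(2,4) by blast+
  have "vm \<noteq> a *s v1 + b *s v2" for a b
  proof
    assume "vm = a *s v1 + b *s v2"
    then have "vp = (x1 - a) *s v1 + (x2 - b) *s v2"
      using assms(7) by (simp add: vec_eq_iff algebra_simps eq_diff_eq)
    with vp_outside show False by blast
  qed
  with vp_outside have "vp \<notin> Q" "vm \<notin> Q" using Q by blast+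
  define z where "z = vp + vm"
  have z: "z = x1 *s v1 + x2 *s v2" using assms(7) by (simp add: z_def)
  have "z \<in> Q" unfolding Q z using assms(9,10) by (intro exI[of _ x1] exI[of _ x2]) simp
  moreover have "z \<noteq> 0" using coeffs[of x1 x2 0 0] assms(10) by (simp add: z)
  ultimately have "z \<in> \<Union>\<Sigma>'"
    using sum_of_rays_outside_is_ray[OF ample \<Sigma>'(3)] rays \<open>vp \<notin> Q\<close> \<open>vm \<notin> Q\<close> by (simp add: z_def)
  show False
  proof (cases "x2 = 0")
    case True
    then have "z = x1 *s v1" by (simp add: z)
    with multiple_of_ray_not_ray[OF ample rays(1)] \<open>z \<in> \<Union>\<Sigma>'\<close> assms(10) show False by simp
  next
    case False
    define y where "y = v1 + v2"
    have y: "y \<in> Q" "y \<noteq> 0"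
      unfolding Q y_def using coeffs[of 1 1 0 0] by (auto intro!: exI[of _ 1])
    have "z \<noteq> y" "v2 \<noteq> y"
      using coeffs[of x1 x2 1 1] coeffs[of 0 1 1 1] assms(10) by (auto simp: y_def z)
    then have "z \<in> \<Union>\<Sigma>' - {y}" "v2 \<in> \<Union>\<Sigma>' - {y}" using \<open>z \<in> \<Union>\<Sigma>'\<close> rays(2) by simp_all
    moreover have "0 \<le> x1 - x2" using assms(8) by simp
    moreover have "x1 *s y = z + (x1 - x2) *s v2" by (simp add: y_def z vec_eq_iff algebra_simps)
    ultimately have "x1 \<le> x1 - x2" by (rule covered_combination_bound[OF ample \<Sigma>'(1,3) y])
    with False assms(9) show False by simp
  qed
qed

end
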